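(* Let $\mathbb{X},\mathbb{Y}$ be finite-dimensional real Banach spaces and let $T\in\mathbb{L}(\mathbb{X},\mathbb{Y})$ be bijective. Then $T$ preserves parallel pairs if and only if $T$ preserves TEA pairs.
   Context: $(x,y)$ is a parallel pair if $\|x+\lambda y\|=\|x\|+\|y\|$ for some scalar $\lambda$ with $|\lambda|=1$; $(x,y)$ is a TEA pair if $\|x+y\|=\|x\|+\|y\|$. $T$ preserves parallel (resp. TEA) pairs if for all $x,y\in\mathbb{X}$, $(x,y)$ a parallel (resp. TEA) pair implies $(Tx,Ty)$ is a parallel (resp. TEA) pair. *)

theory Defs
  imports "HOL-Analysis.Analysis"
begin

definition parallel_pair :: "'a::real_normed_vector \<Rightarrow> 'a \<Rightarrow> bool" where
  "parallel_pair x y \<longleftrightarrow> (\<exists>c::real. \<bar>c\<bar> = 1 \<and> norm (x + c *\<^sub>R y) = norm x + norm y)"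

definition tea_pair :: "'a::real_normed_vector \<Rightarrow> 'a \<Rightarrow> bool" where
  "tea_pair x y \<longleftrightarrow> norm (x + y) = norm x + norm y"

definition preserves_parallel :: "('a::real_normed_vector \<Rightarrow> 'b::real_normed_vector) \<Rightarrow> bool" where
  "preserves_parallel T \<longleftrightarrow> (\<forall>x y. parallel_pair x y \<longrightarrow> parallel_pair (T x) (T y))"

definition preserves_tea :: "('a::real_normed_vector \<Rightarrow> 'b::real_normed_vector) \<Rightarrow> bool" where
  "preserves_tea T \<longleftrightarrow> (\<forall>x y. tea_pair x y \<longrightarrow> tea_pair (T x) (T y))"

definition finite_dim_space :: "'a::real_vector itself \<Rightarrow> bool" where
  "finite_dim_space _ \<longleftrightarrow> (\<exists>B::'a set. finite B \<and> span B = UNIV)"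

end

theory Submission
  imports Defs
begin

text \<open>A pair \<open>(x, y)\<close> is parallel iff \<open>(x, y)\<close> or \<open>(x, -y)\<close> is a TEA pair, which
  gives one direction at once. Conversely, if \<open>(x, y)\<close> is a TEA pair then so is any pair of
  points of the segment \<open>[x, y]\<close>, so \<open>T\<close> maps it onto a segment of nonzero, pairwise parallel
  vectors \<open>w t\<close>. Points \<open>w a\<close>, \<open>w b\<close> closer than the minimal norm on the segment cannot
  satisfy \<open>\<parallel>w a - w b\<parallel> = \<parallel>w a\<parallel> + \<parallel>w b\<parallel>\<close>, so they form a TEA pair, which makes
  \<open>t \<mapsto> \<parallel>w t\<parallel>\<close> affine on short intervals. Gluing overlapping intervals, it is affine on
  the whole segment, and at the midpoint this says \<open>\<parallel>T x + T y\<parallel> = \<parallel>T x\<parallel> + \<parallel>T y\<parallel>\<close>.\<close>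

lemma parallel_pair_iff_tea_pair:
  "parallel_pair x y \<longleftrightarrow> tea_pair x y \<or> tea_pair x (- y)"
proof
  assume "parallel_pair x y"
  then obtain c :: real where "\<bar>c\<bar> = 1" "norm (x + c *\<^sub>R y) = norm x + norm y"
    unfolding parallel_pair_def by blast
  then show "tea_pair x y \<or> tea_pair x (- y)"
    unfolding tea_pair_def by (cases "c = 1") (auto simp: abs_if split: if_splits)
next
  assume "tea_pair x y \<or> tea_pair x (- y)"
  then show "parallel_pair x y"
    unfolding tea_pair_def parallel_pair_def
    by (metis abs_minus_cancel abs_one norm_minus_cancel scaleR_minus1_left scaleR_one)
qed

lemma norm_nonneg_combination_if_tea_pair:
  fixes x y :: "'a::real_normed_vector"
  assumes "tea_pair x y" and "0 \<le> \<alpha>" and "0 \<le> \<beta>"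
  shows "norm (\<alpha> *\<^sub>R x + \<beta> *\<^sub>R y) = \<alpha> * norm x + \<beta> * norm y"
proof (rule antisym)
  show "norm (\<alpha> *\<^sub>R x + \<beta> *\<^sub>R y) \<le> \<alpha> * norm x + \<beta> * norm y"
    using norm_triangle_ineq[of "\<alpha> *\<^sub>R x" "\<beta> *\<^sub>R y"] assms(2,3) by simp
  define \<mu> where "\<mu> = max \<alpha> \<beta>"
  have \<mu>: "0 \<le> \<mu>" "\<alpha> \<le> \<mu>" "\<beta> \<le> \<mu>"
    using assms(2) by (auto simp: \<mu>_def)
  have split: "\<mu> *\<^sub>R (x + y) = (\<alpha> *\<^sub>R x + \<beta> *\<^sub>R y) + ((\<mu> - \<alpha>) *\<^sub>R x + (\<mu> - \<beta>) *\<^sub>R y)"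
    by (simp add: algebra_simps)
  have "\<mu> * (norm x + norm y) = norm (\<mu> *\<^sub>R (x + y))"
    using assms(1) \<mu>(1) by (simp add: tea_pair_def)
  also have "\<dots> \<le> norm (\<alpha> *\<^sub>R x + \<beta> *\<^sub>R y) + ((\<mu> - \<alpha>) * norm x + (\<mu> - \<beta>) * norm y)"
    unfolding split using \<mu>
    by (intro norm_triangle_mono order.refl norm_triangle_le) simp
  finally have "\<mu> * (norm x + norm y) \<le> norm (\<alpha> *\<^sub>R x + \<beta> *\<^sub>R y) + ((\<mu> - \<alpha>) * norm x + (\<mu> - \<beta>) * norm y)" .
  then show "\<alpha> * norm x + \<beta> * norm y \<le> norm (\<alpha> *\<^sub>R x + \<beta> *\<^sub>R y)"
    by (simp add: algebra_simps)
qed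

lemma tea_pair_nonneg_combinations:
  assumes "tea_pair x y" and "0 \<le> \<alpha>" "0 \<le> \<beta>" "0 \<le> \<gamma>" "0 \<le> \<delta>"
  shows "tea_pair (\<alpha> *\<^sub>R x + \<beta> *\<^sub>R y) (\<gamma> *\<^sub>R x + \<delta> *\<^sub>R y)"
proof -
  note norm_comb = norm_nonneg_combination_if_tea_pair[OF assms(1)]
  have "(\<alpha> *\<^sub>R x + \<beta> *\<^sub>R y) + (\<gamma> *\<^sub>R x + \<delta> *\<^sub>R y) = (\<alpha> + \<gamma>) *\<^sub>R x + (\<beta> + \<delta>) *\<^sub>R y"
    by (simp add: algebra_simps)
  then have "norm ((\<alpha> *\<^sub>R x + \<beta> *\<^sub>R y) + (\<gamma> *\<^sub>R x + \<delta> *\<^sub>R y))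
      = (\<alpha> + \<gamma>) * norm x + (\<beta> + \<delta>) * norm y"
    using assms(2-5) by (simp add: norm_comb)
  also have "\<dots> = norm (\<alpha> *\<^sub>R x + \<beta> *\<^sub>R y) + norm (\<gamma> *\<^sub>R x + \<delta> *\<^sub>R y)"
    using assms(2-5) by (simp add: norm_comb distrib_right)
  finally show ?thesis
    unfolding tea_pair_def .
qed

definition affine_on :: "real set \<Rightarrow> (real \<Rightarrow> real) \<Rightarrow> bool" where
  "affine_on S h \<longleftrightarrow> (\<exists>\<alpha> \<beta>. \<forall>t\<in>S. h t = \<alpha> + \<beta> * t)"

lemma affine_on_singleton: "affine_on {a} h"
  unfolding affine_on_def by (intro exI[of _ "h a"] exI[of _ 0]) simp

lemma affine_on_if_chord:
  assumes "a < b" and chord: "\<And>t. t \<in> {a..b} \<Longrightarrow> (b - a) * h t = (b - t) * h a + (t - a) * h b"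
  shows "affine_on {a..b} h"
proof -
  define \<beta> where "\<beta> = (h b - h a) / (b - a)"
  have slope: "(b - a) * \<beta> = h b - h a"
    using assms(1) by (simp add: \<beta>_def)
  have "h t = (h a - \<beta> * a) + \<beta> * t" if "t \<in> {a..b}" for t
  proof -
    have "(b - a) * ((h a - \<beta> * a) + \<beta> * t) = (b - a) * h a + ((b - a) * \<beta>) * (t - a)"
      by (simp add: algebra_simps)
    also have "\<dots> = (b - a) * h t"
      unfolding slope chord[OF that] by (simp add: algebra_simps)
    finally show ?thesis
      using assms(1) by simp
  qed
  then show ?thesis
    unfolding affine_on_def by blast
qed

lemma affine_on_overlapping_union:
  assumes "affine_on {a..c} h" and "affine_on {b..d} h" and "a \<le> b" "b < c" "c \<le> d"
  shows "affine_on {a..d} h"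
proof -
  obtain \<alpha> \<beta> where l: "\<forall>t\<in>{a..c}. h t = \<alpha> + \<beta> * t"
    using assms(1) unfolding affine_on_def by blast
  obtain \<alpha>' \<beta>' where r: "\<forall>t\<in>{b..d}. h t = \<alpha>' + \<beta>' * t"
    using assms(2) unfolding affine_on_def by blast
  have "b \<in> {a..c}" "c \<in> {a..c}" "b \<in> {b..d}" "c \<in> {b..d}"
    using assms(3-5) by auto
  then have "h b = \<alpha> + \<beta> * b" "h c = \<alpha> + \<beta> * c" "h b = \<alpha>' + \<beta>' * b" "h c = \<alpha>' + \<beta>' * c"
    using l r by blast+
  then have "\<alpha> + \<beta> * b = \<alpha>' + \<beta>' * b" "\<alpha> + \<beta> * c = \<alpha>' + \<beta>' * c"
    by (linarith+)
  then have "(\<beta> - \<beta>') * (c - b) = 0"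
    by (simp add: algebra_simps)
  then have "\<beta> = \<beta>'"
    using assms(4) by simp
  with \<open>\<alpha> + \<beta> * b = \<alpha>' + \<beta>' * b\<close> have "\<alpha> = \<alpha>'"
    by simp
  have "h t = \<alpha> + \<beta> * t" if "t \<in> {a..d}" for t
  proof (cases "t \<le> c")
    case True
    then show ?thesis
      using l that by simp
  next
    case False
    then have "t \<in> {b..d}"
      using that assms(4) by simp
    then show ?thesis
      using r \<open>\<alpha> = \<alpha>'\<close> \<open>\<beta> = \<beta>'\<close> by simp
  qed
  then have "\<forall>t\<in>{a..d}. h t = \<alpha> + \<beta> * t" ..
  then show ?thesis
    unfolding affine_on_def by blast
qed

lemma affine_on_if_locally_affine_on:
  assumes "0 < \<delta>"
    and local: "\<And>a b. l \<le> a \<Longrightarrow> a < b \<Longrightarrow> b \<le> r \<Longrightarrow> b - a \<le> \<delta> \<Longrightarrow> affine_on {a..b} h"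
  shows "affine_on {l..r} h"
proof -
  \<comment> \<open>Each step covers \<open>\<delta>/2\<close> more by gluing on an interval of length \<open>\<delta>\<close>.\<close>
  have covers: "affine_on {l..x} h" if "l \<le> x" "x \<le> r" "x \<le> l + real k * (\<delta> / 2)" for k x
    using that
  proof (induction k arbitrary: x)
    case (Suc k)
    consider "x = l" | "l < x" "x \<le> l + \<delta>" | "l + \<delta> < x"
      using Suc.prems(1) by linarith
    then show ?case
    proof cases
      case 1
      then show ?thesis using affine_on_singleton by simp
    next
      case 2
      show ?thesis
        by (rule local) (use 2 Suc.prems(2) in linarith)+
    next
      case 3
      have covered: "x - \<delta> / 2 \<le> l + real k * (\<delta> / 2)"
        using Suc.prems(3) by (simp add: field_simps)
      have "affine_on {l..x - \<delta> / 2} h"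
        by (rule Suc.IH) (use covered Suc.prems(2) 3 assms(1) in linarith)+
      moreover have "affine_on {x - \<delta>..x} h"
        by (rule local) (use Suc.prems(2) 3 assms(1) in linarith)+
      ultimately show ?thesis
        by (rule affine_on_overlapping_union) (use 3 assms(1) in linarith)+
    qed
  qed (use affine_on_singleton in simp)
  show ?thesis
  proof (cases "l \<le> r")
    case True
    obtain k :: nat where "(r - l) / (\<delta> / 2) < k"
      using reals_Archimedean2 by blast
    then have "r \<le> l + real k * (\<delta> / 2)"
      using assms(1) by (simp add: field_simps)
    then show ?thesis
      using True by (rule covers[rotated 2]) simp
  qed (simp add: affine_on_def)
qed

lemma affine_on_norm_line_if_tea_pair:
  fixes p d :: "'a::real_normed_vector"
  assumes "tea_pair (p + a *\<^sub>R d) (p + b *\<^sub>R d)" and "a < b"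
  shows "affine_on {a..b} (\<lambda>t. norm (p + t *\<^sub>R d))"
proof -
  let ?h = "\<lambda>t. norm (p + t *\<^sub>R d)"
  show ?thesis
  proof (rule affine_on_if_chord[OF assms(2)])
    fix t assume "t \<in> {a..b}"
    have "(b - a) * ?h t = norm ((b - a) *\<^sub>R (p + t *\<^sub>R d))"
      using assms(2) by simp
    also have "(b - a) *\<^sub>R (p + t *\<^sub>R d) = (b - t) *\<^sub>R (p + a *\<^sub>R d) + (t - a) *\<^sub>R (p + b *\<^sub>R d)"
      by (simp add: algebra_simps)
    finally show "(b - a) * ?h t = (b - t) * ?h a + (t - a) * ?h b"
      using \<open>t \<in> {a..b}\<close> assms(1) by (simp add: norm_nonneg_combination_if_tea_pair)
  qed
qed

lemma tea_pair_if_pairwise_parallel_segment: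
  fixes u v :: "'a::real_normed_vector"
  assumes parallel: "\<And>p q. p \<in> closed_segment u v \<Longrightarrow> q \<in> closed_segment u v \<Longrightarrow> parallel_pair p q"
    and nonzero: "0 \<notin> closed_segment u v"
  shows "tea_pair u v"
proof -
  define w where "w t = u + t *\<^sub>R (v - u)" for t :: real
  define h where "h t = norm (w t)" for t
  have w_in_segment: "w t \<in> closed_segment u v" if "t \<in> {0..1}" for t
  proof -
    have "w t = (1 - t) *\<^sub>R u + t *\<^sub>R v"
      by (simp add: w_def algebra_simps)
    then show ?thesis
      using that unfolding closed_segment_def by auto
  qed
  have "continuous_on {0..1} h"
    unfolding h_def w_def by (intro continuous_intros)
  then obtain t\<^sub>0 where t\<^sub>0: "t\<^sub>0 \<in> {0..1}" and min: "\<forall>t\<in>{0..1}. h t\<^sub>0 \<le> h t"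
    using continuous_attains_inf[OF compact_Icc, of 0 1 h] by auto
  define m where "m = h t\<^sub>0"
  have "0 < m"
    using nonzero w_in_segment[OF t\<^sub>0] unfolding m_def h_def by auto
  define \<delta> where "\<delta> = m / (norm (v - u) + 1)"
  have "0 < \<delta>"
    using \<open>0 < m\<close> by (simp add: \<delta>_def add_nonneg_pos)
  have "affine_on {a..b} h" if "0 \<le> a" "a < b" "b \<le> 1" "b - a \<le> \<delta>" for a b
  proof -
    \<comment> \<open>The parallel pair \<open>(w a, w b)\<close> cannot have the sign \<open>-1\<close>: \<open>w a\<close> and \<open>w b\<close> are too close.\<close>
    have "w a - w b = (a - b) *\<^sub>R (v - u)"
      by (simp add: w_def algebra_simps)
    then have "norm (w a - w b) = (b - a) * norm (v - u)"
      using that(2) by simp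
    also have "\<dots> \<le> \<delta> * norm (v - u)"
      using that(4) by (simp add: mult_right_mono)
    also have "\<dots> = m * norm (v - u) / (norm (v - u) + 1)"
      by (simp add: \<delta>_def)
    also have "\<dots> < m"
      using \<open>0 < m\<close> by (simp add: pos_divide_less_eq add_nonneg_pos distrib_left)
    also have "m \<le> h a"
      using min that unfolding m_def by simp
    finally have "\<not> tea_pair (w a) (- w b)"
      unfolding tea_pair_def h_def by simp (use norm_ge_zero[of "w b"] in linarith)
    then have "tea_pair (w a) (w b)"
      using parallel[OF w_in_segment[of a] w_in_segment[of b]] that
      unfolding parallel_pair_iff_tea_pair by auto
    then show ?thesis
      unfolding h_def w_def using that(2) by (rule affine_on_norm_line_if_tea_pair)
  qed
  then have "affine_on {0..1} h"
    by (rule affine_on_if_locally_affine_on[OF \<open>0 < \<delta>\<close>])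
  then obtain \<alpha> \<beta> where affine: "\<forall>t\<in>{0..1}. h t = \<alpha> + \<beta> * t"
    unfolding affine_on_def by blast
  have "norm (u + v) = norm ((2::real) *\<^sub>R w (1/2))"
    by (simp add: w_def scaleR_add_right scaleR_2)
  also have "\<dots> = 2 * h (1/2)"
    by (simp add: h_def)
  also have "\<dots> = h 0 + h 1"
    using affine by simp
  also have "\<dots> = norm u + norm v"
    by (simp add: h_def w_def)
  finally show ?thesis
    unfolding tea_pair_def .
qed

lemma tea_pair_if_in_segment_of_tea_pair:
  assumes "tea_pair x y" and "p \<in> closed_segment x y" and "q \<in> closed_segment x y"
  shows "tea_pair p q"
proof -
  obtain s t :: real where "s \<in> {0..1}" "t \<in> {0..1}"
    and "p = (1 - s) *\<^sub>R x + s *\<^sub>R y" "q = (1 - t) *\<^sub>R x + t *\<^sub>R y"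
    using assms(2,3) unfolding closed_segment_def by auto
  then show ?thesis
    using assms(1) by (simp add: tea_pair_nonneg_combinations)
qed

lemma zero_notin_segment_if_tea_pair:
  assumes "tea_pair x y" and "x \<noteq> 0" and "y \<noteq> 0"
  shows "0 \<notin> closed_segment x y"
proof
  assume "0 \<in> closed_segment x y"
  then obtain s :: real where "s \<in> {0..1}" and "(1 - s) *\<^sub>R x + s *\<^sub>R y = 0"
    unfolding closed_segment_def by auto
  then have "(1 - s) * norm x + s * norm y = 0"
    using assms(1) norm_nonneg_combination_if_tea_pair[of x y "1 - s" s] by auto
  moreover have "0 < (1 - s) * norm x + s * norm y"
  proof (cases "s = 0")
    case False
    then have "0 < s * norm y"
      using \<open>s \<in> {0..1}\<close> assms(3) by simp
    then show ?thesis
      using \<open>s \<in> {0..1}\<close> by (simp add: add_nonneg_pos)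
  qed (use assms(2) in simp)
  ultimately show False
    by simp
qed

lemma preserves_parallel_if_preserves_tea:
  fixes T :: "'a::real_normed_vector \<Rightarrow> 'b::real_normed_vector"
  assumes "linear T" and "preserves_tea T"
  shows "preserves_parallel T"
  using assms unfolding preserves_parallel_def preserves_tea_def parallel_pair_iff_tea_pair
  by (metis linear_neg)

lemma preserves_tea_if_preserves_parallel:
  fixes T :: "'a::real_normed_vector \<Rightarrow> 'b::real_normed_vector"
  assumes "linear T" and "inj T" and "preserves_parallel T"
  shows "preserves_tea T"
  unfolding preserves_tea_def
proof (intro allI impI)
  fix x y :: 'a assume xy: "tea_pair x y"
  show "tea_pair (T x) (T y)"
  proof (cases "x = 0 \<or> y = 0")
    case True
    then show ?thesis
      using linear_0[OF assms(1)] by (auto simp: tea_pair_def)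
  next
    case False
    have segment: "closed_segment (T x) (T y) = T ` closed_segment x y"
      using assms(1) by (rule closed_segment_linear_image)
    show ?thesis
    proof (rule tea_pair_if_pairwise_parallel_segment)
      fix p q assume "p \<in> closed_segment (T x) (T y)" "q \<in> closed_segment (T x) (T y)"
      then show "parallel_pair p q"
        using assms(3) xy tea_pair_if_in_segment_of_tea_pair parallel_pair_iff_tea_pair
        unfolding segment preserves_parallel_def by blast
    next
      show "0 \<notin> closed_segment (T x) (T y)"
        using zero_notin_segment_if_tea_pair[OF xy] False assms(1,2)
        unfolding segment by (auto simp: linear_injective_0)
    qed
  qed
qed

theorem mainTheorem13:
  fixes T :: "'a::banach \<Rightarrow> 'b::banach"
  assumes "finite_dim_space TYPE('a)"
    and "finite_dim_space TYPE('b)"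
    and "linear T"
    and "bij T"
  shows "preserves_parallel T \<longleftrightarrow> preserves_tea T"
  using preserves_tea_if_preserves_parallel[OF assms(3) bij_is_inj[OF assms(4)]]
    preserves_parallel_if_preserves_tea[OF assms(3)]
  by blast

end
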